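(* Let $d\ge1$, $\lambda>0$, and let $f_0:\mathbb{R}^d\to[0,\infty)$ be a probability density such that: (i) $f_0$ is continuous and $\lim_{\|x\|\to\infty}f_0(x)=0$; (ii) there are constants $C,\bar\epsilon>0$ with $\int_{\{x:|f_0(x)-\lambda|\le\epsilon\}}f_0(x)\,dx\le C\epsilon$ for all $\epsilon\in(0,\bar\epsilon)$; (iii) for any $\lambda_l<\lambda_h$ in $[\lambda-\bar\epsilon,\lambda+\bar\epsilon]$ and $x,y\in S_{\lambda_h}$, if $x,y$ are disconnected in $S_{\lambda_h}$ then they are disconnected in $S_{\lambda_l}$, and if $x,y$ are connected in $S_{\lambda_l}$ then they are connected in $S_{\lambda_h}$. Let $\mathcal{X}_n=\{x_1,\dots,x_n\}$ be drawn independently from $f_0$ with $n\ge16$, and let $D=\binom n2^{-1}L$ with $L$ the Inactive/Active Binder loss with constants $0<a\le1$, $0<m\le1$, $a\le2m$. Then with probability at least $1-\frac{n+1}{n^2}$, for every $\epsilon\in(0,\bar\epsilon/2)$, $$\sup_{\delta\in[r_{n,\lambda,d},\,2h(\epsilon)]}\ \sup_{f:\|f-f_0\|_\infty\le\epsilon} D\{\tilde\psi_{\lambda,\delta}(f),\psi_\lambda(f_0)\}\le 8\Big(C\epsilon+\sqrt{\tfrac{\ln n}{n}}\Big),$$ where $r_{n,\lambda,d}=2\big(\frac{16\,d\ln n}{\lambda v_d n}\big)^{1/d}$ and $h(\eta)=\max\{h\ge0:\sup_{\|x-y\|\le h}|f_0(x)-f_0(y)|\le\eta\}$.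
   Context: $S_t=\{x\in\mathbb{R}^d:f_0(x)\ge t\}$; connectivity is topological. $v_d$ is the volume of the unit Euclidean ball in $\mathbb{R}^d$. A sub-partition of $\mathcal{X}_n$ is a collection of non-empty pairwise disjoint subsets of $\mathcal{X}_n$ (union possibly proper); its union is the active set, other points are inactive; its allocation vector $c$ has $c_i=h$ if $x_i\in C_h$, $c_i=0$ if inactive. $\psi_\lambda(f_0)$ is the sub-partition of $\mathcal{X}_n$ formed by the non-empty sets $W\cap\mathcal{X}_n$ with $W$ a connected component of $S_\lambda$. For $f:\mathbb{R}^d\to\mathbb{R}$ and $\delta>0$, $\tilde\psi_{\lambda,\delta}(f)$ is the sub-partition given by the graph-theoretic connected components of the graph with vertices $\{x\in\mathcal{X}_n:f(x)\ge\lambda\}$ and edges between $x,y$ with $\|x-y\|<\delta$. The Inactive/Active Binder loss between sub-partitions with active sets $A,A'$, inactive sets $I,I'$ and allocation vectors $c,c'$ is $L=(n-1)m(|A\cap I'|+|I\cap A'|)+\sum_{i<j,\,x_i,x_j\in A\cap A'}a[\mathbf 1(c_i=c_j,c'_i\ne c'_j)+\mathbf 1(c_i\ne c_j,c'_i=c'_j)]$. *)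

theory Defs
  imports "HOL-Probability.Probability"
begin

definition upper_set :: "('a \<Rightarrow> real) \<Rightarrow> real \<Rightarrow> 'a set" where
  "upper_set f t = {x. f x \<ge> t}"

text \<open>Sub-partitions of the sample are represented on the index set {..<n} (x_i = X i):
  a set of non-empty pairwise disjoint subsets of {..<n}.\<close>
definition is_subpartition :: "nat \<Rightarrow> nat set set \<Rightarrow> bool" where
  "is_subpartition n P \<longleftrightarrow> (\<forall>C\<in>P. C \<noteq> {} \<and> C \<subseteq> {..<n}) \<and>
     (\<forall>C\<in>P. \<forall>C'\<in>P. C \<noteq> C' \<longrightarrow> C \<inter> C' = {})"

definition active_set :: "nat set set \<Rightarrow> nat set" where
  "active_set P = \<Union>P"

definition inactive_set :: "nat \<Rightarrow> nat set set \<Rightarrow> nat set" where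
  "inactive_set n P = {..<n} - \<Union>P"

definition same_cluster :: "nat set set \<Rightarrow> nat \<Rightarrow> nat \<Rightarrow> bool" where
  "same_cluster P i j \<longleftrightarrow> (\<exists>C\<in>P. i \<in> C \<and> j \<in> C)"

definition psi_level :: "nat \<Rightarrow> (nat \<Rightarrow> 'a::real_normed_vector) \<Rightarrow> ('a \<Rightarrow> real) \<Rightarrow> real \<Rightarrow> nat set set" where
  "psi_level n X f0 lam =
     {{i. i < n \<and> X i \<in> W} | W. W \<in> components (upper_set f0 lam)} - {{}}"

definition graph_vertices :: "nat \<Rightarrow> (nat \<Rightarrow> 'a::real_normed_vector) \<Rightarrow> ('a \<Rightarrow> real) \<Rightarrow> real \<Rightarrow> nat set" where
  "graph_vertices n X f lam = {i. i < n \<and> f (X i) \<ge> lam}"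

definition graph_edges :: "nat \<Rightarrow> (nat \<Rightarrow> 'a::real_normed_vector) \<Rightarrow> ('a \<Rightarrow> real) \<Rightarrow> real \<Rightarrow> real \<Rightarrow> (nat \<times> nat) set" where
  "graph_edges n X f lam \<delta> =
     {(i, j). i \<in> graph_vertices n X f lam \<and> j \<in> graph_vertices n X f lam \<and> norm (X i - X j) < \<delta>}"

definition psi_graph :: "nat \<Rightarrow> (nat \<Rightarrow> 'a::real_normed_vector) \<Rightarrow> ('a \<Rightarrow> real) \<Rightarrow> real \<Rightarrow> real \<Rightarrow> nat set set" where
  "psi_graph n X f lam \<delta> =
     {{j. (i, j) \<in> (graph_edges n X f lam \<delta>)\<^sup>*} | i. i \<in> graph_vertices n X f lam}"

definition binder_loss :: "nat \<Rightarrow> real \<Rightarrow> real \<Rightarrow> nat set set \<Rightarrow> nat set set \<Rightarrow> real" where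
  "binder_loss n a m P P' =
     real (n - 1) * m * real (card (active_set P \<inter> inactive_set n P') + card (inactive_set n P \<inter> active_set P'))
     + (\<Sum>(i, j) \<in> {(i, j). i < j \<and> j < n \<and> i \<in> active_set P \<inter> active_set P' \<and> j \<in> active_set P \<inter> active_set P'}.
          a * ((if same_cluster P i j \<and> \<not> same_cluster P' i j then 1 else 0)
             + (if \<not> same_cluster P i j \<and> same_cluster P' i j then 1 else 0)))"

definition binder_D :: "nat \<Rightarrow> real \<Rightarrow> real \<Rightarrow> nat set set \<Rightarrow> nat set set \<Rightarrow> real" where
  "binder_D n a m P P' = binder_loss n a m P P' / real (n choose 2)"

text \<open>h(eta) = max{h >= 0 : sup_{||x-y|| <= h} |f0 x - f0 y| <= eta}, as an extended real
  (it equals the max when the max exists, and is infinity if the set is unbounded).\<close>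
definition h_mod :: "('a::real_normed_vector \<Rightarrow> real) \<Rightarrow> real \<Rightarrow> ereal" where
  "h_mod f0 \<eta> = Sup {ereal h | h. h \<ge> 0 \<and>
      (\<forall>x y. norm (x - y) \<le> h \<longrightarrow> \<bar>f0 x - f0 y\<bar> \<le> \<eta>)}"

definition r_rad :: "nat \<Rightarrow> real \<Rightarrow> nat \<Rightarrow> real \<Rightarrow> real" where
  "r_rad n lam d vd = 2 * (16 * real d * ln (real n) / (lam * vd * real n)) powr (1 / real d)"

end

theory Submission
  imports Defs
begin

(* On an event of probability at least 1 - (n + 1) / n^2 the sample is good: every ball of
   radius r / 2 inside the level set S_lam has a sample point near its centre (a union bound
   over a finite net of such balls, each of mass at least 8 d ln n / n), and for every t the
   number of sample points with |f0 - lam| <= t is at most n (C t + 2 sqrt (ln n / n))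
   (Hoeffding's inequality on a grid of thresholds of mesh sqrt (ln n / n) / C, combined with
   the margin condition).

   On a good sample the two clusterings can only disagree at sample points with
   |f0 - lam| <= 2 eps. A path in the graph of f stays inside S_(lam - 2 eps), because its
   edges are shorter than 2 h(eps); conversely, two sample points in one component of
   S_(lam + 2 eps) are joined by a chain of sample points, because the sample covers that
   component at scale r <= delta. The stability hypothesis transfers connectivity between the
   levels lam - 2 eps, lam and lam + 2 eps. Each exceptional point costs at most
   (n - 1) (m + a) <= 2 (n - 1) in the loss, whence D <= 8 (C eps + sqrt (ln n / n)). *)

section \<open>Clusters of the level set and of the neighbourhood graph\<close>

lemma in_active_set_iff_same_cluster: "i \<in> active_set P \<longleftrightarrow> same_cluster P i i"
  by (simp add: active_set_def same_cluster_def)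

lemma same_component_iff_connected_component:
  "(\<exists>W\<in>components S. x \<in> W \<and> y \<in> W) \<longleftrightarrow> connected_component S x y"
proof
  assume "\<exists>W\<in>components S. x \<in> W \<and> y \<in> W"
  then obtain z where "connected_component S z x" "connected_component S z y"
    by (auto simp: components_iff)
  then show "connected_component S x y"
    by (meson connected_component_sym connected_component_trans)
next
  assume "connected_component S x y"
  then show "\<exists>W\<in>components S. x \<in> W \<and> y \<in> W"
    by (intro bexI[of _ "connected_component_set S x"])
       (auto intro: componentsI dest: connected_component_in)
qed

lemma same_cluster_psi_level_iff:
  "same_cluster (psi_level n X f0 lam) i j \<longleftrightarrow>
     i < n \<and> j < n \<and> connected_component (upper_set f0 lam) (X i) (X j)"
proof
  assume "same_cluster (psi_level n X f0 lam) i j"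
  then obtain C where C: "C \<in> psi_level n X f0 lam" "i \<in> C" "j \<in> C"
    unfolding same_cluster_def by blast
  then obtain W where "W \<in> components (upper_set f0 lam)" "C = {k. k < n \<and> X k \<in> W}"
    unfolding psi_level_def by blast
  with C have "W \<in> components (upper_set f0 lam)" "i < n" "j < n" "X i \<in> W" "X j \<in> W"
    by auto
  then show "i < n \<and> j < n \<and> connected_component (upper_set f0 lam) (X i) (X j)"
    using same_component_iff_connected_component by metis
next
  assume ij: "i < n \<and> j < n \<and> connected_component (upper_set f0 lam) (X i) (X j)"
  then obtain W where W: "W \<in> components (upper_set f0 lam)" "X i \<in> W" "X j \<in> W"
    using same_component_iff_connected_component by metis
  define C where "C = {k. k < n \<and> X k \<in> W}"
  have C: "i \<in> C" "j \<in> C" using ij W by (simp_all add: C_def)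
  have "C \<in> psi_level n X f0 lam"
    unfolding psi_level_def
  proof (rule DiffI)
    show "C \<in> {{k. k < n \<and> X k \<in> W} |W. W \<in> components (upper_set f0 lam)}"
      using W(1) by (auto simp: C_def)
    show "C \<notin> {{}}" using C by auto
  qed
  with C show "same_cluster (psi_level n X f0 lam) i j"
    unfolding same_cluster_def by (intro bexI conjI)
qed

lemma active_set_psi_level:
  "active_set (psi_level n X f0 lam) = {i. i < n \<and> X i \<in> upper_set f0 lam}"
  by (auto simp: in_active_set_iff_same_cluster same_cluster_psi_level_iff)

lemma converse_graph_edges: "(graph_edges n X f lam \<delta>)\<inverse> = graph_edges n X f lam \<delta>"
  by (auto simp: graph_edges_def norm_minus_commute)

lemma rtrancl_graph_edges_sym:
  "(i, j) \<in> (graph_edges n X f lam \<delta>)\<^sup>* \<Longrightarrow> (j, i) \<in> (graph_edges n X f lam \<delta>)\<^sup>*"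
  by (metis converse_graph_edges rtrancl_converseI)

lemma rtrancl_graph_edges_vertex:
  "(i, j) \<in> (graph_edges n X f lam \<delta>)\<^sup>* \<Longrightarrow> i \<in> graph_vertices n X f lam \<Longrightarrow>
     j \<in> graph_vertices n X f lam"
  by (induction rule: rtrancl_induct) (auto simp: graph_edges_def)

lemma same_cluster_psi_graph_iff:
  "same_cluster (psi_graph n X f lam \<delta>) i j \<longleftrightarrow>
     i \<in> graph_vertices n X f lam \<and> (i, j) \<in> (graph_edges n X f lam \<delta>)\<^sup>*"
proof
  assume "same_cluster (psi_graph n X f lam \<delta>) i j"
  then obtain v where "v \<in> graph_vertices n X f lam"
      "(v, i) \<in> (graph_edges n X f lam \<delta>)\<^sup>*" "(v, j) \<in> (graph_edges n X f lam \<delta>)\<^sup>*"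
    unfolding same_cluster_def psi_graph_def by blast
  then show "i \<in> graph_vertices n X f lam \<and> (i, j) \<in> (graph_edges n X f lam \<delta>)\<^sup>*"
    by (meson rtrancl_graph_edges_vertex rtrancl_graph_edges_sym rtrancl_trans)
next
  assume "i \<in> graph_vertices n X f lam \<and> (i, j) \<in> (graph_edges n X f lam \<delta>)\<^sup>*"
  then show "same_cluster (psi_graph n X f lam \<delta>) i j"
    unfolding same_cluster_def psi_graph_def by blast
qed

lemma active_set_psi_graph: "active_set (psi_graph n X f lam \<delta>) = graph_vertices n X f lam"
  by (auto simp: in_active_set_iff_same_cluster same_cluster_psi_graph_iff)

lemma closed_segment_near_endpoint:
  fixes a b z :: "'a::euclidean_space"
  assumes "z \<in> closed_segment a b"
  shows "dist z a \<le> dist a b / 2 \<or> dist z b \<le> dist a b / 2"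
proof -
  have "z \<in> closed_segment a (midpoint a b) \<or> z \<in> closed_segment (midpoint a b) b"
    using assms Un_closed_segment[OF midpoint_in_closed_segment] by blast
  then show ?thesis
  proof
    assume "z \<in> closed_segment a (midpoint a b)"
    then have "dist z a \<le> dist a (midpoint a b)" using dist_in_closed_segment by blast
    then show ?thesis by (simp add: dist_midpoint)
  next
    assume "z \<in> closed_segment (midpoint a b) b"
    then have "dist z b \<le> dist (midpoint a b) b" using dist_in_closed_segment by blast
    then show ?thesis by (simp add: dist_midpoint)
  qed
qed

context
  fixes g f :: "'a::euclidean_space \<Rightarrow> real" and \<delta> \<epsilon> :: real
  assumes modulus: "\<And>x z. dist x z < \<delta> / 2 \<Longrightarrow> \<bar>g x - g z\<bar> \<le> \<epsilon>"
    and close: "\<And>x. \<bar>f x - g x\<bar> \<le> \<epsilon>"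
begin

lemma rtrancl_graph_edges_imp_connected_lower:
  assumes path: "(i, j) \<in> (graph_edges n X f lam \<delta>)\<^sup>*"
    and i: "i \<in> graph_vertices n X f lam"
  shows "connected_component (upper_set g (lam - 2 * \<epsilon>)) (X i) (X j)"
  using path
proof (induction rule: rtrancl_induct)
  case base
  have "0 \<le> \<epsilon>" using close[of undefined] by linarith
  with i close[of "X i"] have "lam - 2 * \<epsilon> \<le> g (X i)"
    by (simp add: graph_vertices_def abs_le_iff)
  then show ?case by (simp add: upper_set_def)
next
  case (step j k)
  then have j: "f (X j) \<ge> lam" and k: "f (X k) \<ge> lam" and jk: "dist (X j) (X k) < \<delta>"
    by (auto simp: graph_edges_def graph_vertices_def dist_norm)
  have "closed_segment (X j) (X k) \<subseteq> upper_set g (lam - 2 * \<epsilon>)"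
  proof
    fix p assume "p \<in> closed_segment (X j) (X k)"
    then obtain v where "f (X v) \<ge> lam" "dist p (X v) < \<delta> / 2"
      using closed_segment_near_endpoint j k jk by fastforce
    with modulus[of p "X v"] close[of "X v"] show "p \<in> upper_set g (lam - 2 * \<epsilon>)"
      by (auto simp: upper_set_def)
  qed
  then have "connected_component (upper_set g (lam - 2 * \<epsilon>)) (X j) (X k)"
    by (intro connected_componentI[of "closed_segment (X j) (X k)"]) auto
  with step.IH show ?case by (rule connected_component_trans)
qed

lemma near_sample_in_graph_vertices:
  assumes "p \<in> upper_set g (lam + 2 * \<epsilon>)" "k < n" "dist (X k) p < \<delta> / 2"
  shows "k \<in> graph_vertices n X f lam"
  using assms modulus[of "X k" p] close[of "X k"] by (simp add: upper_set_def graph_vertices_def)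

lemma upper_level_has_near_sample:
  assumes "r \<le> \<delta>"
    and cover: "\<And>c. ball c (r / 2) \<subseteq> upper_set g lam \<Longrightarrow> \<exists>k<n. dist (X k) c < r / 2 * (1 - \<eta>)"
    and p: "p \<in> upper_set g (lam + 2 * \<epsilon>)"
  shows "\<exists>k<n. dist (X k) p < r / 2 * (1 - \<eta>)"
proof (rule cover, rule subsetI)
  fix y assume "y \<in> ball p (r / 2)"
  with \<open>r \<le> \<delta>\<close> modulus[of y p] have "\<bar>g y - g p\<bar> \<le> \<epsilon>" by (simp add: dist_commute)
  moreover have "0 \<le> \<epsilon>" using close[of undefined] by linarith
  ultimately show "y \<in> upper_set g lam" using p by (simp add: upper_set_def)
qed

lemma near_samples_adjacent:
  assumes r: "0 < r" "r \<le> \<delta>" and \<eta>: "0 < \<eta>" "\<eta> < 1"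
    and pq: "p \<in> upper_set g (lam + 2 * \<epsilon>)" "q \<in> upper_set g (lam + 2 * \<epsilon>)" "dist p q < \<eta> * r / 2"
    and kl: "k < n" "l < n" "dist (X k) p < r / 2 * (1 - \<eta>)" "dist (X l) q < r / 2 * (1 - \<eta>)"
  shows "(k, l) \<in> graph_edges n X f lam \<delta>"
proof -
  have "dist (X k) (X l) \<le> dist (X k) p + dist p q + dist q (X l)"
    using dist_triangle[of "X k" "X l" p] dist_triangle[of p "X l" q] by linarith
  also have "\<dots> < r / 2 * (1 - \<eta>) + \<eta> * r / 2 + r / 2 * (1 - \<eta>)"
    using kl pq by (intro add_strict_mono) (auto simp: dist_commute)
  also have "\<dots> = r - \<eta> * r / 2" by (simp add: algebra_simps)
  also have "\<dots> \<le> \<delta>" using r mult_pos_pos[OF \<eta>(1) r(1)] by linarith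
  finally have "dist (X k) (X l) < \<delta>" .
  moreover have "r * (1 - \<eta>) \<le> r" using r \<eta> by (intro mult_left_le) auto
  then have "r / 2 * (1 - \<eta>) \<le> \<delta> / 2" using r by linarith
  then have "k \<in> graph_vertices n X f lam" "l \<in> graph_vertices n X f lam"
    using near_sample_in_graph_vertices pq kl by fastforce+
  ultimately show ?thesis by (simp add: graph_edges_def dist_norm)
qed

text \<open>The relation "all sample points near \<open>p\<close> are joined by graph paths to all sample points
  near \<open>q\<close>" holds for nearby points of \<open>upper_set g (lam + 2 * \<epsilon>)\<close> and is transitive there
  (every such point has a sample point near it), hence it holds on each connected component.\<close>
lemma connected_upper_imp_rtrancl_graph_edges:
  assumes r: "0 < r" "r \<le> \<delta>" and \<eta>: "0 < \<eta>" "\<eta> < 1"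
    and cover: "\<And>c. ball c (r / 2) \<subseteq> upper_set g lam \<Longrightarrow> \<exists>k<n. dist (X k) c < r / 2 * (1 - \<eta>)"
    and ij: "i < n" "j < n"
    and connected: "connected_component (upper_set g (lam + 2 * \<epsilon>)) (X i) (X j)"
  shows "(i, j) \<in> (graph_edges n X f lam \<delta>)\<^sup>*"
proof -
  define S where "S = upper_set g (lam + 2 * \<epsilon>)"
  define T where "T = connected_component_set S (X i)"
  define near where "near p = {k. k < n \<and> dist (X k) p < r / 2 * (1 - \<eta>)}" for p
  define R where "R p q \<longleftrightarrow> near p \<times> near q \<subseteq> (graph_edges n X f lam \<delta>)\<^sup>*" for p q
  have TS: "T \<subseteq> S" unfolding T_def by (rule connected_component_subset)
  have "R (X i) (X j)"
  proof (rule connected_equivalence_relation[of T])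
    show "connected T" unfolding T_def by (rule connected_connected_component)
    show "X i \<in> T" "X j \<in> T" using connected connected_component_in by (auto simp: T_def S_def)
  next
    fix p q assume "R p q"
    then show "R q p" by (auto simp: R_def intro: rtrancl_graph_edges_sym)
  next
    fix p q u assume "R p q" "R q u" "q \<in> T"
    with TS have "q \<in> upper_set g (lam + 2 * \<epsilon>)" by (auto simp: S_def)
    with r(2) cover have "\<exists>k<n. dist (X k) q < r / 2 * (1 - \<eta>)"
      by (rule upper_level_has_near_sample)
    then obtain k where "k \<in> near q" by (auto simp: near_def)
    with \<open>R p q\<close> \<open>R q u\<close> show "R p u" by (auto simp: R_def intro: rtrancl_trans)
  next
    fix p assume p: "p \<in> T"
    show "\<exists>U. openin (top_of_set T) U \<and> p \<in> U \<and> (\<forall>q\<in>U. R p q)"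
    proof (intro exI conjI ballI)
      show "openin (top_of_set T) (T \<inter> ball p (\<eta> * r / 2))" by (intro openin_open_Int) auto
      show "p \<in> T \<inter> ball p (\<eta> * r / 2)" using p \<eta> r by auto
    next
      fix q assume q: "q \<in> T \<inter> ball p (\<eta> * r / 2)"
      have "(k, l) \<in> graph_edges n X f lam \<delta>" if "k \<in> near p" "l \<in> near q" for k l
        using p q TS that
        by (intro near_samples_adjacent[OF r \<eta>, where p = p and q = q])
          (auto simp: S_def near_def dist_commute)
      then show "R p q" by (auto simp: R_def)
    qed
  qed
  moreover have "i \<in> near (X i)" "j \<in> near (X j)" using ij r \<eta> by (auto simp: near_def)
  ultimately show ?thesis unfolding R_def by blast
qed

end

section \<open>The Binder loss\<close>

lemma finite_pairs_below: "finite {(i, j). i < j \<and> j < (n::nat) \<and> P i j}"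
  by (rule finite_subset[of _ "{..<n} \<times> {..<n}"]) auto

lemma card_pairs_meeting_le:
  assumes "K \<subseteq> {..<n}"
  shows "card {(i, j). i < j \<and> j < n \<and> (i \<in> K \<or> j \<in> K)} \<le> card K * (n - 1)"
proof -
  have fin: "finite K" using assms finite_subset by blast
  have "{(i, j). i < j \<and> j < n \<and> (i \<in> K \<or> j \<in> K)} \<subseteq> (\<Union>k\<in>K. {k} \<times> {k<..<n} \<union> {..<k} \<times> {k})"
    by auto
  then have "card {(i, j). i < j \<and> j < n \<and> (i \<in> K \<or> j \<in> K)}
      \<le> card (\<Union>k\<in>K. {k} \<times> {k<..<n} \<union> {..<k} \<times> {k})"
    by (rule card_mono[rotated]) (use fin in auto)
  also have "\<dots> \<le> (\<Sum>k\<in>K. card ({k} \<times> {k<..<n} \<union> {..<k} \<times> {k}))"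
    by (rule card_UN_le[OF fin])
  also have "\<dots> \<le> (\<Sum>k\<in>K. n - 1)"
  proof (rule sum_mono)
    fix k assume "k \<in> K"
    then have "k < n" using assms by auto
    have "card ({k} \<times> {k<..<n} \<union> {..<k} \<times> {k}) \<le> card ({k} \<times> {k<..<n}) + card ({..<k} \<times> {k})"
      by (rule card_Un_le)
    also have "\<dots> = n - 1" using \<open>k < n\<close> by (simp add: card_cartesian_product)
    finally show "card ({k} \<times> {k<..<n} \<union> {..<k} \<times> {k}) \<le> n - 1" .
  qed
  finally show ?thesis by simp
qed

lemma real_choose_two: "real (n choose 2) = real n * (real n - 1) / 2"
proof -
  have "even (n * (n - 1))" by auto
  then show ?thesis by (cases n) (simp_all add: choose_two real_of_nat_div algebra_simps)
qed

definition binder_disagreements :: "nat \<Rightarrow> nat set set \<Rightarrow> nat set set \<Rightarrow> (nat \<times> nat) set" where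
  "binder_disagreements n P P' = {(i, j). i < j \<and> j < n \<and>
     i \<in> active_set P \<inter> active_set P' \<and> j \<in> active_set P \<inter> active_set P' \<and>
     same_cluster P i j \<noteq> same_cluster P' i j}"

lemma binder_loss_eq:
  "binder_loss n a m P P' =
     real (n - 1) * m
       * real (card (active_set P \<inter> inactive_set n P') + card (inactive_set n P \<inter> active_set P'))
     + a * real (card (binder_disagreements n P P'))"
proof -
  define Pairs where "Pairs = {(i, j). i < j \<and> j < n \<and>
    i \<in> active_set P \<inter> active_set P' \<and> j \<in> active_set P \<inter> active_set P'}"
  have "finite Pairs" by (rule finite_subset[of _ "{..<n} \<times> {..<n}"]) (auto simp: Pairs_def)
  have "(\<Sum>(i, j)\<in>Pairs. a * ((if same_cluster P i j \<and> \<not> same_cluster P' i j then 1 else 0)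
        + (if \<not> same_cluster P i j \<and> same_cluster P' i j then 1 else 0)))
      = a * (\<Sum>p\<in>Pairs. of_bool (p \<in> binder_disagreements n P P'))"
    by (auto simp: sum_distrib_left binder_disagreements_def Pairs_def intro!: sum.cong)
  also have "\<dots> = a * real (card (Pairs \<inter> {p. p \<in> binder_disagreements n P P'}))"
    using \<open>finite Pairs\<close> by simp
  also have "Pairs \<inter> {p. p \<in> binder_disagreements n P P'} = binder_disagreements n P P'"
    by (auto simp: binder_disagreements_def Pairs_def)
  finally show ?thesis by (simp add: binder_loss_def Pairs_def)
qed

text \<open>A disagreeing pair must meet \<open>K\<close>, and each point of \<open>K\<close> lies in at most \<open>n - 1\<close> pairs.\<close>
lemma binder_loss_le_card:
  assumes K: "K \<subseteq> {..<n}"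
    and activity: "card (active_set P \<inter> inactive_set n P') + card (inactive_set n P \<inter> active_set P')
      \<le> card K"
    and split: "\<And>i j. i \<in> active_set P \<inter> active_set P' \<Longrightarrow> j \<in> active_set P \<inter> active_set P' \<Longrightarrow>
      same_cluster P i j \<Longrightarrow> same_cluster P' i j"
    and merge: "\<And>i j. i \<in> active_set P \<inter> active_set P' \<Longrightarrow> j \<in> active_set P \<inter> active_set P' \<Longrightarrow>
      same_cluster P' i j \<Longrightarrow> \<not> same_cluster P i j \<Longrightarrow> i \<in> K \<or> j \<in> K"
    and a: "0 \<le> a" and m: "0 \<le> m"
  shows "binder_loss n a m P P' \<le> real (n - 1) * (m + a) * real (card K)"
proof -
  have "binder_disagreements n P P' \<subseteq> {(i, j). i < j \<and> j < n \<and> (i \<in> K \<or> j \<in> K)}"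
    using split merge by (auto simp: binder_disagreements_def)
  then have "card (binder_disagreements n P P') \<le> card {(i, j). i < j \<and> j < n \<and> (i \<in> K \<or> j \<in> K)}"
    by (intro card_mono finite_pairs_below)
  also have "\<dots> \<le> card K * (n - 1)" by (rule card_pairs_meeting_le[OF K])
  finally have "card (binder_disagreements n P P') \<le> card K * (n - 1)" .
  then have "a * real (card (binder_disagreements n P P')) \<le> a * (real (n - 1) * real (card K))"
    using a by (intro mult_left_mono) (simp_all add: mult.commute flip: of_nat_mult)
  moreover have "real (n - 1) * m * real (card (active_set P \<inter> inactive_set n P')
      + card (inactive_set n P \<inter> active_set P')) \<le> real (n - 1) * m * real (card K)"
    using activity m by (intro mult_left_mono) auto
  ultimately show ?thesis by (simp add: binder_loss_eq algebra_simps)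
qed

lemma binder_D_le_card:
  assumes "2 \<le> n" and "binder_loss n a m P P' \<le> real (n - 1) * c"
  shows "binder_D n a m P P' \<le> 2 * c / real n"
proof -
  have "binder_D n a m P P' = binder_loss n a m P P' / (real n * (real n - 1) / 2)"
    by (simp add: binder_D_def real_choose_two)
  also have "\<dots> \<le> real (n - 1) * c / (real n * (real n - 1) / 2)"
    using assms by (intro divide_right_mono) auto
  also have "\<dots> = 2 * c / real n" using assms(1) by (simp add: field_simps)
  finally show ?thesis .
qed

lemma inactive_set_eq: "inactive_set n P = {..<n} - active_set P"
  by (simp add: inactive_set_def active_set_def)

lemma card_activity_mismatch_le:
  assumes close: "\<And>x. \<bar>f x - f0 x\<bar> \<le> \<epsilon>"
  shows "card (active_set (psi_graph n X f lam \<delta>) \<inter> inactive_set n (psi_level n X f0 lam))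
      + card (inactive_set n (psi_graph n X f lam \<delta>) \<inter> active_set (psi_level n X f0 lam))
    \<le> card {i. i < n \<and> \<bar>f0 (X i) - lam\<bar> \<le> \<epsilon>}"
proof -
  define V where "V = graph_vertices n X f lam"
  define A where "A = {i. i < n \<and> X i \<in> upper_set f0 lam}"
  have fin: "finite V" "finite A" by (simp_all add: V_def A_def graph_vertices_def)
  have "card (V - A) + card (A - V) = card ((V - A) \<union> (A - V))"
    using fin by (intro card_Un_disjoint[symmetric]) auto
  also have "\<dots> \<le> card {i. i < n \<and> \<bar>f0 (X i) - lam\<bar> \<le> \<epsilon>}"
  proof (rule card_mono)
    show "(V - A) \<union> (A - V) \<subseteq> {i. i < n \<and> \<bar>f0 (X i) - lam\<bar> \<le> \<epsilon>}"
    proof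
      fix i assume "i \<in> (V - A) \<union> (A - V)"
      with close[of "X i"] show "i \<in> {i. i < n \<and> \<bar>f0 (X i) - lam\<bar> \<le> \<epsilon>}"
        by (auto simp: V_def A_def graph_vertices_def upper_set_def abs_le_iff)
    qed
  qed simp
  moreover have "active_set (psi_graph n X f lam \<delta>) \<inter> inactive_set n (psi_level n X f0 lam) = V - A"
    "inactive_set n (psi_graph n X f lam \<delta>) \<inter> active_set (psi_level n X f0 lam) = A - V"
    by (auto simp: inactive_set_eq active_set_psi_graph active_set_psi_level V_def A_def
        graph_vertices_def)
  ultimately show ?thesis by simp
qed

context
  fixes f0 f :: "'a::euclidean_space \<Rightarrow> real" and X :: "nat \<Rightarrow> 'a" and n :: nat
    and lam \<delta> \<epsilon> r \<eta> :: real
  assumes modulus: "\<And>x z. dist x z < \<delta> / 2 \<Longrightarrow> \<bar>f0 x - f0 z\<bar> \<le> \<epsilon>"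
    and close: "\<And>x. \<bar>f x - f0 x\<bar> \<le> \<epsilon>"
    and r: "0 < r" "r \<le> \<delta>" and \<eta>: "0 < \<eta>" "\<eta> < 1"
    and cover: "\<And>c. ball c (r / 2) \<subseteq> upper_set f0 lam \<Longrightarrow> \<exists>k<n. dist (X k) c < r / 2 * (1 - \<eta>)"
    and stable_low: "\<And>x y. x \<in> upper_set f0 lam \<Longrightarrow> y \<in> upper_set f0 lam \<Longrightarrow>
      connected_component (upper_set f0 (lam - 2 * \<epsilon>)) x y \<Longrightarrow>
      connected_component (upper_set f0 lam) x y"
    and stable_high: "\<And>x y. x \<in> upper_set f0 (lam + 2 * \<epsilon>) \<Longrightarrow> y \<in> upper_set f0 (lam + 2 * \<epsilon>) \<Longrightarrow>
      connected_component (upper_set f0 lam) x y \<Longrightarrow>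
      connected_component (upper_set f0 (lam + 2 * \<epsilon>)) x y"
begin

lemma same_cluster_psi_graph_imp_psi_level:
  assumes same: "same_cluster (psi_graph n X f lam \<delta>) i j"
    and active: "X i \<in> upper_set f0 lam" "X j \<in> upper_set f0 lam"
  shows "same_cluster (psi_level n X f0 lam) i j"
proof -
  from same have i: "i \<in> graph_vertices n X f lam" and path: "(i, j) \<in> (graph_edges n X f lam \<delta>)\<^sup>*"
    by (simp_all add: same_cluster_psi_graph_iff)
  have "j \<in> graph_vertices n X f lam" using path i by (rule rtrancl_graph_edges_vertex)
  moreover have "connected_component (upper_set f0 (lam - 2 * \<epsilon>)) (X i) (X j)"
    using modulus close path i by (rule rtrancl_graph_edges_imp_connected_lower)
  ultimately show ?thesis
    using i active stable_low by (simp add: same_cluster_psi_level_iff graph_vertices_def)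
qed

lemma same_cluster_psi_level_imp_psi_graph:
  assumes same: "same_cluster (psi_level n X f0 lam) i j"
    and i: "i \<in> graph_vertices n X f lam"
    and deep: "X i \<in> upper_set f0 (lam + 2 * \<epsilon>)" "X j \<in> upper_set f0 (lam + 2 * \<epsilon>)"
  shows "same_cluster (psi_graph n X f lam \<delta>) i j"
proof -
  from same have "i < n" "j < n" "connected_component (upper_set f0 lam) (X i) (X j)"
    by (simp_all add: same_cluster_psi_level_iff)
  with deep stable_high have "connected_component (upper_set f0 (lam + 2 * \<epsilon>)) (X i) (X j)"
    by blast
  with modulus close r \<eta> cover \<open>i < n\<close> \<open>j < n\<close>
  have "(i, j) \<in> (graph_edges n X f lam \<delta>)\<^sup>*"
    by (rule connected_upper_imp_rtrancl_graph_edges)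
  with i show ?thesis by (simp add: same_cluster_psi_graph_iff)
qed

lemma binder_D_psi_le_card_margin:
  assumes a: "0 \<le> a" and m: "0 \<le> m" and am: "m + a \<le> 2" and n: "2 \<le> n"
  shows "binder_D n a m (psi_graph n X f lam \<delta>) (psi_level n X f0 lam)
    \<le> 4 * real (card {i. i < n \<and> \<bar>f0 (X i) - lam\<bar> \<le> 2 * \<epsilon>}) / real n"
proof -
  define K where "K = {i. i < n \<and> \<bar>f0 (X i) - lam\<bar> \<le> 2 * \<epsilon>}"
  let ?G = "psi_graph n X f lam \<delta>" and ?L = "psi_level n X f0 lam"
  have "0 \<le> \<epsilon>" using close[of undefined] by linarith
  have "binder_loss n a m ?G ?L \<le> real (n - 1) * (m + a) * real (card K)"
  proof (rule binder_loss_le_card)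
    show "K \<subseteq> {..<n}" by (auto simp: K_def)
    have "card {i. i < n \<and> \<bar>f0 (X i) - lam\<bar> \<le> \<epsilon>} \<le> card K"
      using \<open>0 \<le> \<epsilon>\<close> by (intro card_mono) (auto simp: K_def)
    with card_activity_mismatch_le[OF close]
    show "card (active_set ?G \<inter> inactive_set n ?L) + card (inactive_set n ?G \<inter> active_set ?L)
      \<le> card K"
      by (rule le_trans)
  next
    fix i j assume "i \<in> active_set ?G \<inter> active_set ?L" "j \<in> active_set ?G \<inter> active_set ?L"
      "same_cluster ?G i j"
    then show "same_cluster ?L i j"
      by (simp add: active_set_psi_level same_cluster_psi_graph_imp_psi_level)
  next
    fix i j assume ij: "i \<in> active_set ?G \<inter> active_set ?L" "j \<in> active_set ?G \<inter> active_set ?L"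
      "same_cluster ?L i j" "\<not> same_cluster ?G i j"
    show "i \<in> K \<or> j \<in> K"
    proof (rule ccontr)
      assume "\<not> (i \<in> K \<or> j \<in> K)"
      with ij(1,2) have "X i \<in> upper_set f0 (lam + 2 * \<epsilon>)" "X j \<in> upper_set f0 (lam + 2 * \<epsilon>)"
        by (auto simp: K_def active_set_psi_level upper_set_def)
      with ij(1,3) have "same_cluster ?G i j"
        by (simp add: active_set_psi_graph same_cluster_psi_level_imp_psi_graph)
      with ij(4) show False by contradiction
    qed
  qed (use a m in auto)
  then have "binder_D n a m ?G ?L \<le> 2 * ((m + a) * real (card K)) / real n"
    using n by (intro binder_D_le_card) (simp_all add: mult.assoc)
  also have "\<dots> \<le> 4 * real (card K) / real n"
    using am by (intro divide_right_mono) (auto intro: mult_right_mono)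
  finally show ?thesis unfolding K_def .
qed

end

section \<open>Counting sample points\<close>

lemma card_eq_sum_indicator:
  fixes n :: nat
  shows "real (card {i. i < n \<and> X i \<in> A}) = (\<Sum>i<n. indicator A (X i))"
proof -
  have "(\<Sum>i<n. indicator A (X i) :: real) = (\<Sum>i<n. of_bool (X i \<in> A))"
    by (simp add: indicator_def)
  also have "\<dots> = real (card ({..<n} \<inter> {i. X i \<in> A}))"
    by (rule sum_of_bool_eq) simp_all
  also have "{..<n} \<inter> {i. X i \<in> A} = {i. i < n \<and> X i \<in> A}" by auto
  finally show ?thesis by simp
qed

lemma measurable_card_sample_in:
  fixes n :: nat
  assumes [measurable]: "A \<in> sets M"
  shows "(\<lambda>X. real (card {i. i < n \<and> X i \<in> A})) \<in> borel_measurable (PiM {..<n} (\<lambda>_. M))"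
  unfolding card_eq_sum_indicator by measurable

lemma finite_product_prob_space_power:
  assumes "prob_space M"
  shows "finite_product_prob_space (\<lambda>_. M) {..<(n::nat)}"
proof -
  interpret product_prob_space "\<lambda>_. M" "{..<n}"
    using product_prob_spaceI[of "\<lambda>_. M"] assms by simp
  show ?thesis
    unfolding finite_product_prob_space_def finite_product_sigma_finite_def
      finite_product_sigma_finite_axioms_def
    using product_prob_space_axioms product_sigma_finite_axioms by simp
qed

lemma sets_PiM_all_miss:
  fixes n :: nat
  assumes [measurable]: "B \<in> sets M"
  shows "{X \<in> space (PiM {..<n} (\<lambda>_. M)). \<forall>i<n. X i \<notin> B} \<in> sets (PiM {..<n} (\<lambda>_. M))"
proof -
  have "{X \<in> space (PiM {..<n} (\<lambda>_. M)). \<forall>i<n. X i \<notin> B}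
      = {X \<in> space (PiM {..<n} (\<lambda>_. M)). \<forall>i\<in>{..<n}. X i \<notin> B}"
    by auto
  also have "\<dots> \<in> sets (PiM {..<n} (\<lambda>_. M))"
    by (rule sets.sets_Collect_finite_All) simp_all
  finally show ?thesis .
qed

lemma measure_PiM_all_miss:
  assumes M: "prob_space M" and B: "B \<in> sets M"
  shows "measure (PiM {..<n} (\<lambda>_. M)) {X \<in> space (PiM {..<n} (\<lambda>_. M)). \<forall>i<n. X i \<notin> B}
      = (1 - measure M B) ^ n"
proof -
  interpret finite_product_prob_space "\<lambda>_. M" "{..<n}"
    by (rule finite_product_prob_space_power[OF M])
  interpret M: prob_space M by fact
  have "{X \<in> space (PiM {..<n} (\<lambda>_. M)). \<forall>i<n. X i \<notin> B} = (\<Pi>\<^sub>E i\<in>{..<n}. space M - B)"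
  proof (intro set_eqI iffI)
    fix X assume "X \<in> {X \<in> space (PiM {..<n} (\<lambda>_. M)). \<forall>i<n. X i \<notin> B}"
    then show "X \<in> (\<Pi>\<^sub>E i\<in>{..<n}. space M - B)" by (simp add: space_PiM PiE_iff)
  next
    fix X assume "X \<in> (\<Pi>\<^sub>E i\<in>{..<n}. space M - B)"
    then show "X \<in> {X \<in> space (PiM {..<n} (\<lambda>_. M)). \<forall>i<n. X i \<notin> B}"
      by (simp add: space_PiM PiE_iff)
  qed
  then have "measure (PiM {..<n} (\<lambda>_. M)) {X \<in> space (PiM {..<n} (\<lambda>_. M)). \<forall>i<n. X i \<notin> B}
      = (\<Prod>i<n. measure M (space M - B))"
    using prob_times[of "\<lambda>_. space M - B"] B by simp
  then show ?thesis using M.prob_compl[OF B] by simp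
qed

lemma measure_PiM_all_miss_le_exp:
  assumes M: "prob_space M" and B: "B \<in> sets M"
  shows "measure (PiM {..<n} (\<lambda>_. M)) {X \<in> space (PiM {..<n} (\<lambda>_. M)). \<forall>i<n. X i \<notin> B}
      \<le> exp (- (real n * measure M B))"
proof -
  interpret M: prob_space M by fact
  have "(1 - measure M B) ^ n \<le> exp (- measure M B) ^ n"
    by (rule power_mono) (use exp_ge_add_one_self[of "- measure M B"] in auto)
  then show ?thesis
    by (simp add: measure_PiM_all_miss[OF M B] exp_of_nat_mult[symmetric])
qed

lemma indep_vars_PiM_components:
  assumes M: "prob_space M" and "I \<noteq> {}"
  shows "prob_space.indep_vars (PiM I (\<lambda>_. M)) (\<lambda>_. M) (\<lambda>i X. X i) I"
proof -
  interpret P: prob_space "PiM I (\<lambda>_. M)" by (rule prob_space_PiM) (use M in auto)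
  show ?thesis
  proof (subst P.indep_vars_iff_distr_eq_PiM')
    show "(\<lambda>X. X i) \<in> measurable (PiM I (\<lambda>_. M)) M" if "i \<in> I" for i
      using that by measurable
    have "distr (PiM I (\<lambda>_. M)) (PiM I (\<lambda>_. M)) (\<lambda>x. \<lambda>i\<in>I. x i) = PiM I (\<lambda>_. M)"
      by (subst distr_cong[where g = "\<lambda>x. x"]) (auto simp: space_PiM PiE_def extensional_def)
    also have "\<dots> = PiM I (\<lambda>i. distr (PiM I (\<lambda>_. M)) M (\<lambda>X. X i))"
      by (rule PiM_cong) (auto intro!: distr_PiM_component[symmetric] M)
    finally show "distr (PiM I (\<lambda>_. M)) (PiM I (\<lambda>_. M)) (\<lambda>x. \<lambda>i\<in>I. x i)
        = PiM I (\<lambda>i. distr (PiM I (\<lambda>_. M)) M (\<lambda>X. X i))" .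
  qed fact
qed

lemma hoeffding_card_sample_in:
  assumes M: "prob_space M" and A: "A \<in> sets M" and n: "n > 0" and s: "s \<ge> 0"
  shows "measure (PiM {..<n} (\<lambda>_. M)) {X \<in> space (PiM {..<n} (\<lambda>_. M)).
      real n * measure M A + real n * s \<le> real (card {i. i < n \<and> X i \<in> A})}
    \<le> exp (- 2 * real n * s\<^sup>2)"
proof -
  interpret P: prob_space "PiM {..<n} (\<lambda>_. M)" by (rule prob_space_PiM) (use M in auto)
  define Y where "Y i X = (indicator A (X i) :: real)" for i and X :: "nat \<Rightarrow> _"
  have expectation: "P.expectation (Y i) = measure M A" if "i < n" for i
  proof -
    have "P.expectation (Y i) = integral\<^sup>L (distr (PiM {..<n} (\<lambda>_. M)) M (\<lambda>X. X i)) (indicator A)"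
      unfolding Y_def using that A by (subst integral_distr) auto
    also have "distr (PiM {..<n} (\<lambda>_. M)) M (\<lambda>X. X i) = M"
      by (rule distr_PiM_component) (use M that in auto)
    finally show ?thesis using A by simp
  qed
  interpret H: Hoeffding_ineq "PiM {..<n} (\<lambda>_. M)" "{..<n}" Y "\<lambda>_. 0" "\<lambda>_. 1"
    "\<Sum>i<n. P.expectation (Y i)"
  proof unfold_locales
    show "P.indep_vars (\<lambda>_. borel) Y {..<n}"
      unfolding Y_def
      by (rule P.indep_vars_compose2[OF indep_vars_PiM_components[OF M]]) (use A n in auto)
  qed (auto simp: Y_def)
  have "P.prob {X \<in> space (PiM {..<n} (\<lambda>_. M)).
        (\<Sum>i<n. P.expectation (Y i)) + real n * s \<le> (\<Sum>i<n. Y i X)}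
      \<le> exp (- 2 * (real n * s)\<^sup>2 / (\<Sum>i<n. (1 - 0)\<^sup>2))"
    by (rule H.Hoeffding_ineq_ge) (use n s in auto)
  then show ?thesis
    using n by (simp add: expectation Y_def card_eq_sum_indicator power2_eq_square mult_ac)
qed

lemma hoeffding_card_sample_in_family:
  assumes M: "prob_space M" and \<A>: "finite \<A>" "\<A> \<subseteq> sets M" and n: "n > 0" and s: "s \<ge> 0"
  shows "\<exists>B\<in>sets (PiM {..<n} (\<lambda>_. M)).
    measure (PiM {..<n} (\<lambda>_. M)) B \<le> real (card \<A>) * exp (- 2 * real n * s\<^sup>2) \<and>
    (\<forall>X\<in>space (PiM {..<n} (\<lambda>_. M)) - B. \<forall>A\<in>\<A>.
      real (card {i. i < n \<and> X i \<in> A}) < real n * measure M A + real n * s)"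
proof
  define Bad where "Bad A = {X \<in> space (PiM {..<n} (\<lambda>_. M)).
    real n * measure M A + real n * s \<le> real (card {i. i < n \<and> X i \<in> A})}" for A
  have sets: "Bad A \<in> sets (PiM {..<n} (\<lambda>_. M))" if "A \<in> \<A>" for A
  proof -
    have [measurable]:
      "(\<lambda>X. real (card {i. i < n \<and> X i \<in> A})) \<in> borel_measurable (PiM {..<n} (\<lambda>_. M))"
      using that \<A>(2) by (intro measurable_card_sample_in) blast
    show ?thesis unfolding Bad_def by measurable
  qed
  then show "(\<Union>A\<in>\<A>. Bad A) \<in> sets (PiM {..<n} (\<lambda>_. M))"
    using \<A>(1) by blast
  have "measure (PiM {..<n} (\<lambda>_. M)) (\<Union>A\<in>\<A>. Bad A)
      \<le> (\<Sum>A\<in>\<A>. measure (PiM {..<n} (\<lambda>_. M)) (Bad A))"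
    using sets \<A>(1) by (intro measure_UNION_le) auto
  also have "\<dots> \<le> (\<Sum>A\<in>\<A>. exp (- 2 * real n * s\<^sup>2))"
  proof (rule sum_mono)
    fix A assume "A \<in> \<A>"
    with \<A>(2) show "measure (PiM {..<n} (\<lambda>_. M)) (Bad A) \<le> exp (- 2 * real n * s\<^sup>2)"
      unfolding Bad_def by (intro hoeffding_card_sample_in[OF M _ n s]) blast
  qed
  finally show "measure (PiM {..<n} (\<lambda>_. M)) (\<Union>A\<in>\<A>. Bad A)
      \<le> real (card \<A>) * exp (- 2 * real n * s\<^sup>2) \<and>
    (\<forall>X\<in>space (PiM {..<n} (\<lambda>_. M)) - (\<Union>A\<in>\<A>. Bad A). \<forall>A\<in>\<A>.
      real (card {i. i < n \<and> X i \<in> A}) < real n * measure M A + real n * s)"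
    by (auto simp: Bad_def not_le)
qed

lemma (in prob_space) prob_less_le_of_prob_le:
  assumes g [measurable]: "random_variable borel g" and e: "0 < e"
    and bound: "\<And>t. 0 < t \<Longrightarrow> t < e \<Longrightarrow> prob {x \<in> space M. g x \<le> t} \<le> C * t"
  shows "prob {x \<in> space M. g x < e} \<le> C * e"
proof -
  interpret D: real_distribution "distr M borel g"
    using g by (rule real_distribution_distr)
  have cdf: "cdf (distr M borel g) t = prob {x \<in> space M. g x \<le> t}" for t
    unfolding cdf_def by (subst measure_distr) (auto intro!: arg_cong[where f = prob])
  have "measure (distr M borel g) {..<e} = prob {x \<in> space M. g x < e}"
    by (subst measure_distr) (auto intro!: arg_cong[where f = prob])
  then have lim_cdf: "(cdf (distr M borel g) \<longlongrightarrow> prob {x \<in> space M. g x < e}) (at_left e)"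
    using D.cdf_at_left[of e] by simp
  have lim_linear: "((\<lambda>t. C * t) \<longlongrightarrow> C * e) (at_left e)"
    by (intro tendsto_mult_left tendsto_ident_at)
  have "\<forall>\<^sub>F t in at_left e. cdf (distr M borel g) t \<le> C * t"
    using eventually_at_left_real[OF e] by eventually_elim (simp add: cdf bound)
  with lim_linear lim_cdf show ?thesis by (rule tendsto_le[OF trivial_limit_at_left_real])
qed

lemma one_le_ln_nat: "3 \<le> n \<Longrightarrow> 1 \<le> ln (real n)"
  using exp_le by (subst ln_ge_iff) auto

lemma exp_neg_mult_ln:
  assumes "0 < n"
  shows "exp (- (real k * ln (real n))) = 1 / real n ^ k"
proof -
  have "exp (real k * ln (real n)) = real n ^ k"
    using assms by (simp add: exp_of_nat_mult)
  then show ?thesis by (simp add: exp_minus field_simps)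
qed

lemma nat_ceiling_inverse_rate_less:
  assumes n: "16 \<le> n"
  shows "nat \<lceil>1 / sqrt (ln (real n) / real n)\<rceil> < n"
proof -
  have "4 \<le> sqrt (real n)" using n by (simp add: real_le_rsqrt)
  then have "4 * sqrt (real n) \<le> sqrt (real n) * sqrt (real n)" by (intro mult_right_mono) auto
  then have "sqrt (real n) \<le> real n - 1" using \<open>4 \<le> sqrt (real n)\<close> by simp
  moreover have "1 / sqrt (ln (real n) / real n) \<le> sqrt (real n)"
    using one_le_ln_nat[of n] n
    by (simp add: real_sqrt_divide divide_le_eq real_sqrt_ge_one mult_le_cancel_left1)
  ultimately have "\<lceil>1 / sqrt (ln (real n) / real n)\<rceil> < int n"
    by (simp add: ceiling_less_iff)
  with n show ?thesis by (simp add: nat_less_iff)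
qed

lemma hoeffding_card_sample_in_family_rate:
  assumes M: "prob_space M" and \<A>: "finite \<A>" "\<A> \<subseteq> sets M" "card \<A> \<le> n" and n: "3 \<le> n"
  shows "\<exists>B\<in>sets (PiM {..<n} (\<lambda>_. M)). measure (PiM {..<n} (\<lambda>_. M)) B \<le> 1 / real n \<and>
    (\<forall>X\<in>space (PiM {..<n} (\<lambda>_. M)) - B. \<forall>A\<in>\<A>. real (card {i. i < n \<and> X i \<in> A})
      < real n * measure M A + real n * sqrt (ln (real n) / real n))"
proof -
  define s where "s = sqrt (ln (real n) / real n)"
  have "0 < ln (real n) / real n" using one_le_ln_nat[OF n] n by simp
  then have s: "0 \<le> s" "s\<^sup>2 = ln (real n) / real n" by (simp_all add: s_def)
  have "exp (- 2 * real n * s\<^sup>2) = 1 / real n ^ 2"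
    using exp_neg_mult_ln[of n 2] n s(2) by simp
  then have "real (card \<A>) * exp (- 2 * real n * s\<^sup>2) \<le> real n / real n ^ 2"
    using \<A>(3) by (simp add: divide_right_mono)
  also have "\<dots> = 1 / real n" by (simp add: power2_eq_square)
  finally have bound: "real (card \<A>) * exp (- 2 * real n * s\<^sup>2) \<le> 1 / real n" .
  have "0 < n" using n by simp
  from hoeffding_card_sample_in_family[OF M \<A>(1,2) this s(1)] obtain B
    where "B \<in> sets (PiM {..<n} (\<lambda>_. M))"
      "measure (PiM {..<n} (\<lambda>_. M)) B \<le> real (card \<A>) * exp (- 2 * real n * s\<^sup>2)"
      "\<forall>X\<in>space (PiM {..<n} (\<lambda>_. M)) - B. \<forall>A\<in>\<A>.
        real (card {i. i < n \<and> X i \<in> A}) < real n * measure M A + real n * s"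
    by auto
  with bound show ?thesis unfolding s_def by (intro bexI[of _ B]) auto
qed

lemma card_sample_le_of_grid_bounds:
  fixes g :: "'a \<Rightarrow> real" and X :: "nat \<Rightarrow> 'a" and N :: nat
  assumes s: "0 < s" and C: "0 < C" and N: "1 / s \<le> real N"
    and grid: "\<And>j. j \<in> {1..N} \<Longrightarrow> real j * s / C < e \<Longrightarrow>
      real (card {i. i < n \<and> g (X i) \<le> real j * s / C}) < real n * (real j * s + s)"
    and top: "real (card {i. i < n \<and> g (X i) < e}) < real n * (C * e + s)"
    and t: "0 < t" "t < e"
  shows "real (card {i. i < n \<and> g (X i) \<le> t}) \<le> real n * (C * t + 2 * s)"
proof (cases "1 \<le> C * t")
  case True
  have "card {i. i < n \<and> g (X i) \<le> t} \<le> card {..<n}" by (intro card_mono) auto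
  then have "real (card {i. i < n \<and> g (X i) \<le> t}) \<le> real n * 1" by simp
  also have "\<dots> \<le> real n * (C * t + 2 * s)" using True s by (intro mult_left_mono) auto
  finally show ?thesis .
next
  case False
  define j where "j = nat \<lceil>C * t / s\<rceil>"
  have "0 < C * t / s" using C s t by simp
  then have j: "C * t / s \<le> real j" "real j < C * t / s + 1" "1 \<le> j"
    unfolding j_def by linarith+
  have "C * t / s \<le> 1 / s" using False s by (simp add: divide_right_mono)
  with N have "j \<in> {1..N}" using j(3) unfolding j_def by (simp add: nat_le_iff ceiling_le_iff)
  have tj: "t \<le> real j * s / C" and js: "real j * s < C * t + s"
    using j(1,2) s C by (simp_all add: field_simps)
  have count_mono: "real (card {i. i < n \<and> g (X i) \<le> t}) \<le> real (card {i. i < n \<and> P (X i)})"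
    if "\<And>x. g x \<le> t \<Longrightarrow> P x" for P
    using that by (intro of_nat_mono card_mono) auto
  show ?thesis
  proof (cases "real j * s / C < e")
    case True
    with grid[OF \<open>j \<in> {1..N}\<close>] count_mono[of "\<lambda>x. g x \<le> real j * s / C"] tj js
    show ?thesis by (smt (verit, best) mult_left_mono of_nat_0_le_iff)
  next
    case False
    have "C * e \<le> real j * s" using False C by (simp add: field_simps)
    with top count_mono[of "\<lambda>x. g x < e"] t js
    show ?thesis by (smt (verit, best) mult_left_mono of_nat_0_le_iff)
  qed
qed

lemma card_sample_in_space_Collect:
  assumes "X \<in> space (PiM {..<n} (\<lambda>_. M))"
  shows "{i. i < n \<and> X i \<in> space M \<and> P i} = {i. i < n \<and> P i}"
  using assms by (auto simp: space_PiM PiE_iff)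

lemma sample_margin_count_bound:
  fixes M :: "'a measure" and g :: "'a \<Rightarrow> real"
  assumes M: "prob_space M" and g [measurable]: "g \<in> borel_measurable M"
    and C: "0 < C" and e: "0 < e"
    and margin: "\<And>t. 0 < t \<Longrightarrow> t < e \<Longrightarrow> measure M {x \<in> space M. g x \<le> t} \<le> C * t"
    and n: "16 \<le> n"
  shows "\<exists>B\<in>sets (PiM {..<n} (\<lambda>_. M)). measure (PiM {..<n} (\<lambda>_. M)) B \<le> 1 / real n \<and>
    (\<forall>X\<in>space (PiM {..<n} (\<lambda>_. M)) - B. \<forall>t. 0 < t \<and> t < e \<longrightarrow>
      real (card {i. i < n \<and> g (X i) \<le> t}) \<le> real n * (C * t + 2 * sqrt (ln (real n) / real n)))"
proof -
  interpret M: prob_space M by fact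
  define s where "s = sqrt (ln (real n) / real n)"
  define N where "N = nat \<lceil>1 / s\<rceil>"
  define \<A> where
    "\<A> = insert {x \<in> space M. g x < e} ((\<lambda>j. {x \<in> space M. g x \<le> real j * s / C}) ` {1..N})"
  have "0 < s" using one_le_ln_nat[of n] n by (simp add: s_def)
  have "card ((\<lambda>j. {x \<in> space M. g x \<le> real j * s / C}) ` {1..N}) \<le> N"
    using card_image_le[of "{1..N}"] by simp
  then have "card \<A> \<le> Suc N" by (simp add: \<A>_def card_insert_if)
  also have "\<dots> \<le> n" using nat_ceiling_inverse_rate_less[OF n] by (simp add: N_def s_def)
  finally have "finite \<A>" "\<A> \<subseteq> sets M" "card \<A> \<le> n" by (auto simp: \<A>_def)
  from hoeffding_card_sample_in_family_rate[OF M this] n obtain B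
    where B: "B \<in> sets (PiM {..<n} (\<lambda>_. M))" "measure (PiM {..<n} (\<lambda>_. M)) B \<le> 1 / real n"
      "\<forall>X\<in>space (PiM {..<n} (\<lambda>_. M)) - B. \<forall>A\<in>\<A>.
        real (card {i. i < n \<and> X i \<in> A}) < real n * measure M A + real n * s"
    unfolding s_def by auto
  have freq: "real (card {i. i < n \<and> P (X i)}) < real n * measure M {x \<in> space M. P x} + real n * s"
    if "X \<in> space (PiM {..<n} (\<lambda>_. M)) - B" "{x \<in> space M. P x} \<in> \<A>" for X P
  proof -
    from B(3) that have "real (card {i. i < n \<and> X i \<in> {x \<in> space M. P x}})
        < real n * measure M {x \<in> space M. P x} + real n * s"
      by blast
    with that(1) show ?thesis by (simp add: card_sample_in_space_Collect)
  qed
  have "real (card {i. i < n \<and> g (X i) \<le> t}) \<le> real n * (C * t + 2 * s)"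
    if X: "X \<in> space (PiM {..<n} (\<lambda>_. M)) - B" and t: "0 < t" "t < e" for X t
  proof (rule card_sample_le_of_grid_bounds[OF \<open>0 < s\<close> C _ _ _ t])
    show "1 / s \<le> real N" unfolding N_def by linarith
  next
    fix j :: nat assume j: "j \<in> {1..N}" "real j * s / C < e"
    with margin[of "real j * s / C"] \<open>0 < s\<close> C
    have "real n * measure M {x \<in> space M. g x \<le> real j * s / C} \<le> real n * (real j * s)"
      by (intro mult_left_mono) auto
    with freq[OF X, of "\<lambda>x. g x \<le> real j * s / C"] j
    show "real (card {i. i < n \<and> g (X i) \<le> real j * s / C}) < real n * (real j * s + s)"
      by (auto simp: \<A>_def distrib_left)
  next
    have "real n * measure M {x \<in> space M. g x < e} \<le> real n * (C * e)"
      using M.prob_less_le_of_prob_le[OF _ e margin] by (intro mult_left_mono) simp_all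
    with freq[OF X, of "\<lambda>x. g x < e"]
    show "real (card {i. i < n \<and> g (X i) < e}) < real n * (C * e + s)"
      by (auto simp: \<A>_def distrib_left)
  qed
  with B(1,2) show ?thesis unfolding s_def by blast
qed

section \<open>Nets\<close>

lemma maximal_separated_set_is_net:
  fixes T :: "'a::metric_space set"
  assumes bound: "\<And>F. finite F \<Longrightarrow> F \<subseteq> T \<Longrightarrow> (\<forall>x\<in>F. \<forall>y\<in>F. x \<noteq> y \<longrightarrow> s \<le> dist x y) \<Longrightarrow> card F \<le> B"
    and s: "0 < s"
  shows "\<exists>F. finite F \<and> F \<subseteq> T \<and> (\<forall>x\<in>F. \<forall>y\<in>F. x \<noteq> y \<longrightarrow> s \<le> dist x y) \<and>
    (\<forall>c\<in>T. \<exists>c'\<in>F. dist c c' < s)"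
proof -
  define sep where "sep k \<longleftrightarrow> (\<exists>F. finite F \<and> F \<subseteq> T \<and>
    (\<forall>x\<in>F. \<forall>y\<in>F. x \<noteq> y \<longrightarrow> s \<le> dist x y) \<and> card F = k)" for k
  have sep0: "sep 0" unfolding sep_def by (intro exI[of _ "{}"]) auto
  have sep_bounded: "\<forall>k. sep k \<longrightarrow> k \<le> B" unfolding sep_def using bound by blast
  obtain k where k: "sep k" "\<forall>k'. sep k' \<longrightarrow> k' \<le> k"
    using Nat.ex_has_greatest_nat[OF sep0 sep_bounded] by blast
  then obtain F where F: "finite F" "F \<subseteq> T" "\<forall>x\<in>F. \<forall>y\<in>F. x \<noteq> y \<longrightarrow> s \<le> dist x y" "card F = k"
    unfolding sep_def by blast
  have "\<forall>c\<in>T. \<exists>c'\<in>F. dist c c' < s"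
  proof (rule ccontr)
    assume "\<not> (\<forall>c\<in>T. \<exists>c'\<in>F. dist c c' < s)"
    then obtain c where c: "c \<in> T" "\<forall>c'\<in>F. s \<le> dist c c'" by (auto simp: not_less)
    have "c \<notin> F" using c(2) s by force
    have "sep (Suc k)" unfolding sep_def
    proof (intro exI conjI)
      show "finite (insert c F)" "insert c F \<subseteq> T" using F c by simp_all
      show "\<forall>x\<in>insert c F. \<forall>y\<in>insert c F. x \<noteq> y \<longrightarrow> s \<le> dist x y"
        using F(3) c(2) by (auto simp: dist_commute)
      show "card (insert c F) = Suc k" using F \<open>c \<notin> F\<close> by simp
    qed
    then show False using k(2) by fastforce
  qed
  with F show ?thesis by blast
qed

lemma finite_net_of_ball_mass:
  fixes M :: "'a::metric_space measure"
  assumes M: "prob_space M" and s: "0 < s" and p: "0 < p"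
    and mass: "\<And>c. c \<in> T \<Longrightarrow> ball c (s / 2) \<in> sets M \<and> p \<le> measure M (ball c (s / 2))"
  shows "\<exists>F. finite F \<and> F \<subseteq> T \<and> real (card F) * p \<le> 1 \<and> (\<forall>c\<in>T. \<exists>c'\<in>F. dist c c' < s)"
proof -
  interpret prob_space M by fact
  have card: "real (card F) * p \<le> 1"
    if F: "finite F" "F \<subseteq> T" "\<forall>x\<in>F. \<forall>y\<in>F. x \<noteq> y \<longrightarrow> s \<le> dist x y" for F
  proof -
    have "disjoint_family_on (\<lambda>x. ball x (s / 2)) F"
      unfolding disjoint_family_on_def
    proof (intro ballI impI)
      fix x y assume "x \<in> F" "y \<in> F" "x \<noteq> y"
      with F(3) have "s \<le> dist x y" by blast
      have "z \<notin> ball y (s / 2)" if "z \<in> ball x (s / 2)" for z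
        using that \<open>s \<le> dist x y\<close> dist_triangle[of x y z] by (simp add: dist_commute)
      then show "ball x (s / 2) \<inter> ball y (s / 2) = {}" by blast
    qed
    with F mass have "prob (\<Union>x\<in>F. ball x (s / 2)) = (\<Sum>x\<in>F. prob (ball x (s / 2)))"
      by (intro finite_measure_finite_Union) auto
    moreover have "real (card F) * p = (\<Sum>x\<in>F. p)" by simp
    moreover have "\<dots> \<le> (\<Sum>x\<in>F. prob (ball x (s / 2)))"
      using F(2) mass by (intro sum_mono) blast
    ultimately show ?thesis using prob_le_1[of "\<Union>x\<in>F. ball x (s / 2)"] by linarith
  qed
  have "\<exists>F. finite F \<and> F \<subseteq> T \<and> (\<forall>x\<in>F. \<forall>y\<in>F. x \<noteq> y \<longrightarrow> s \<le> dist x y) \<and>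
    (\<forall>c\<in>T. \<exists>c'\<in>F. dist c c' < s)"
  proof (rule maximal_separated_set_is_net[OF _ s])
    fix F assume "finite F" "F \<subseteq> T" "\<forall>x\<in>F. \<forall>y\<in>F. x \<noteq> y \<longrightarrow> s \<le> dist x y"
    with card have "real (card F) * p \<le> 1" by blast
    with p have "real (card F) \<le> 1 / p" by (simp add: le_divide_eq)
    then show "card F \<le> nat \<lceil>1 / p\<rceil>" by linarith
  qed
  with card show ?thesis by blast
qed

lemma r_rad_pos_and_volume:
  assumes n: "3 \<le> n" and lam: "0 < lam" and vd: "0 < vd" and d: "1 \<le> d"
  shows "0 < r_rad n lam d vd"
    and "lam * vd * (r_rad n lam d vd / 2) ^ d = 16 * real d * ln (real n) / real n"
proof -
  define L where "L = 16 * real d * ln (real n) / (lam * vd * real n)"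
  have "0 < L" unfolding L_def using lam vd d n one_le_ln_nat[OF n] by simp
  moreover have r: "r_rad n lam d vd = 2 * L powr (1 / real d)" by (simp add: r_rad_def L_def)
  ultimately show "0 < r_rad n lam d vd" by simp
  have "(L powr (1 / real d)) ^ d = L"
    using \<open>0 < L\<close> d by (simp add: powr_realpow[symmetric] powr_powr)
  then show "lam * vd * (r_rad n lam d vd / 2) ^ d = 16 * real d * ln (real n) / real n"
    unfolding r L_def using lam vd n by (simp add: field_simps)
qed

lemma half_le_power_one_minus_half_inverse:
  assumes "1 \<le> d"
  shows "1 / 2 \<le> (1 - 1 / (2 * real d)) ^ d"
proof -
  have "1 + real d * (- 1 / (2 * real d)) \<le> (1 + - 1 / (2 * real d)) ^ d"
    by (rule Bernoulli_inequality) (use assms in \<open>auto simp: field_simps\<close>)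
  then show ?thesis using assms by simp
qed

lemma net_card_div_power_le:
  assumes n: "16 \<le> n" and d: "1 \<le> d" and big: "16 * real d * ln (real n) \<le> real n"
    and c: "real c * (16 * real d * ln (real n) / (real n * (8 * real d) ^ d)) \<le> 1"
  shows "real c / real n ^ (8 * d) \<le> 1 / real n ^ 2"
proof -
  define A where "A = 16 * real d * ln (real n)"
  define B where "B = real n * (8 * real d) ^ d"
  have "1 \<le> ln (real n)" using one_le_ln_nat[of n] n by simp
  then have A: "16 * real d \<le> A"
    unfolding A_def using mult_left_mono[of 1 "ln (real n)" "16 * real d"] by simp
  moreover have "1 \<le> real d" using d by simp
  ultimately have A: "16 * real d \<le> A" "1 \<le> A" by linarith+
  have B: "0 < B" using n d by (simp add: B_def)
  have "8 * real d \<le> real n" using A(1) big by (simp add: A_def)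
  then have "(8 * real d) ^ d \<le> real n ^ d" by (rule power_mono) simp
  then have "real n ^ 3 * (8 * real d) ^ d \<le> real n ^ 3 * real n ^ d" by (rule mult_left_mono) simp
  then have "real n ^ 2 * B \<le> real n ^ 3 * real n ^ d"
    by (simp add: B_def power3_eq_cube power2_eq_square mult.assoc)
  also have "\<dots> \<le> real n ^ (8 * d)"
    unfolding power_add[symmetric] by (rule power_increasing) (use d n in auto)
  finally have nB: "real n ^ 2 * B \<le> real n ^ (8 * d)" .
  have "real c * A \<le> B" using c A B by (simp add: A_def B_def field_simps)
  then have "real c \<le> B / A" using A by (simp add: le_divide_eq)
  also have "\<dots> \<le> B / 1" using A B by (intro divide_left_mono) simp_all
  finally have "real c * real n ^ 2 \<le> B * real n ^ 2" by (intro mult_right_mono) simp_all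
  with nB have "real c * real n ^ 2 \<le> real n ^ (8 * d)" by (simp add: mult.commute)
  moreover have "0 < real n ^ 2" "0 < real n ^ (8 * d)" using n by simp_all
  ultimately show ?thesis by (simp add: divide_le_eq le_divide_eq mult.commute)
qed

section \<open>Good samples\<close>

definition good_sample ::
    "nat \<Rightarrow> real \<Rightarrow> real \<Rightarrow> real \<Rightarrow> real \<Rightarrow> ('a::euclidean_space \<Rightarrow> real) \<Rightarrow> (nat \<Rightarrow> 'a) \<Rightarrow> bool"
  where "good_sample n lam C epsbar r f0 X \<longleftrightarrow>
    (\<forall>c. ball c (r / 2) \<subseteq> upper_set f0 lam \<longrightarrow>
      (\<exists>k<n. dist (X k) c < r / 2 * (1 - 1 / (4 * real DIM('a))))) \<and>
    (\<forall>t. 0 < t \<and> t < epsbar \<longrightarrow> real (card {i. i < n \<and> \<bar>f0 (X i) - lam\<bar> \<le> t})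
      \<le> real n * (C * t + 2 * sqrt (ln (real n) / real n)))"

context
  fixes f0 :: "'a::euclidean_space \<Rightarrow> real"
  assumes nonneg: "\<And>x. 0 \<le> f0 x"
    and integrable: "integrable lborel f0" and integral_one: "integral\<^sup>L lborel f0 = 1"
begin

lemma density_borel_measurable [measurable]: "f0 \<in> borel_measurable borel"
  using borel_measurable_integrable[OF integrable] by simp

lemma prob_space_density: "prob_space (density lborel f0)"
proof
  have "emeasure (density lborel f0) UNIV = ennreal (integral\<^sup>L lborel f0)"
    using nonneg by (simp add: emeasure_density nn_integral_eq_integral[OF integrable])
  then show "emeasure (density lborel f0) (space (density lborel f0)) = 1"
    by (simp add: integral_one)
qed

lemma measure_density_eq_set_integral:
  assumes [measurable]: "A \<in> sets borel"
  shows "measure (density lborel f0) A = (LINT x : A | lborel. f0 x)"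
proof -
  have int: "integrable lborel (\<lambda>x. indicator A x * f0 x)"
    using integrable_mult_indicator[OF _ integrable, of A] by simp
  have "emeasure (density lborel f0) A = (\<integral>\<^sup>+ x. ennreal (indicator A x * f0 x) \<partial>lborel)"
    by (subst emeasure_density) (auto intro!: nn_integral_cong simp: indicator_def)
  also have "\<dots> = ennreal (LINT x : A | lborel. f0 x)"
    using nonneg by (subst nn_integral_eq_integral[OF int]) (auto simp: set_lebesgue_integral_def)
  finally have "emeasure (density lborel f0) A = ennreal (LINT x : A | lborel. f0 x)" .
  moreover have "0 \<le> (LINT x : A | lborel. f0 x)"
    unfolding set_lebesgue_integral_def by (intro integral_nonneg_AE AE_I2) (simp add: nonneg)
  ultimately show ?thesis by (simp add: measure_def)
qed

lemma measure_density_ge_volume: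
  assumes [measurable]: "B \<in> sets borel" and B: "B \<subseteq> upper_set f0 lam" and lam: "0 \<le> lam"
  shows "lam * measure lborel B \<le> measure (density lborel f0) B"
proof -
  interpret M: prob_space "density lborel f0" by (rule prob_space_density)
  have "ennreal (lam * measure lborel B) \<le> ennreal lam * emeasure lborel B"
    using lam by (simp add: ennreal_mult' measure_def ennreal_enn2real_if)
  also have "\<dots> = (\<integral>\<^sup>+ x. ennreal lam * indicator B x \<partial>lborel)"
    by (simp add: nn_integral_cmult_indicator)
  also have "\<dots> \<le> (\<integral>\<^sup>+ x. ennreal (f0 x) * indicator B x \<partial>lborel)"
    using B by (intro nn_integral_mono) (auto simp: upper_set_def indicator_def ennreal_leI)
  also have "\<dots> = emeasure (density lborel f0) B"
    by (simp add: emeasure_density mult.commute)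
  finally show ?thesis
    by (simp add: M.emeasure_eq_measure)
qed

lemma measure_density_ball_ge:
  assumes "ball c \<rho> \<subseteq> upper_set f0 lam" "0 \<le> lam" "0 \<le> \<rho>"
  shows "lam * (\<rho> ^ DIM('a) * measure lborel (ball (0::'a) 1))
    \<le> measure (density lborel f0) (ball c \<rho>)"
proof -
  have "lam * measure lborel (ball c \<rho>) \<le> measure (density lborel f0) (ball c \<rho>)"
    using assms(1,2) by (intro measure_density_ge_volume) auto
  moreover have "measure lborel (ball c \<rho>) = \<rho> ^ DIM('a) * measure lborel (ball (0::'a) 1)"
    using assms(3) by (rule content_ball_conv_unit_ball)
  ultimately show ?thesis by simp
qed

context
  fixes n :: nat and lam r :: real
  assumes n: "16 \<le> n" and lam: "0 < lam"
    and r: "r = r_rad n lam DIM('a) (measure lborel (ball (0::'a) 1))"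
begin

lemma radius_pos: "0 < r"
  and radius_volume: "lam * measure lborel (ball (0::'a) 1) * (r / 2) ^ DIM('a)
    = 16 * real DIM('a) * ln (real n) / real n"
  using r_rad_pos_and_volume[of n lam "measure lborel (ball (0::'a) 1)" "DIM('a)"] n lam
  by (simp_all add: r Suc_leI)

lemma upper_ball_forces_large_sample:
  assumes "ball c (r / 2) \<subseteq> upper_set f0 lam"
  shows "16 * real DIM('a) * ln (real n) \<le> real n"
proof -
  have "lam * ((r / 2) ^ DIM('a) * measure lborel (ball (0::'a) 1))
      \<le> measure (density lborel f0) (ball c (r / 2))"
    using assms radius_pos lam by (intro measure_density_ball_ge) auto
  also have "\<dots> \<le> 1" by (rule prob_space.prob_le_1[OF prob_space_density])
  finally have "16 * real DIM('a) * ln (real n) / real n \<le> 1"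
    using radius_volume by (simp add: mult_ac)
  then show ?thesis using n by (simp add: divide_le_eq)
qed

text \<open>Shrinking the radius by the factor \<open>1 - 1 / (2 d)\<close> loses at most half of the volume
  (Bernoulli).\<close>
lemma inner_ball_mass_ge:
  assumes ball: "ball c (r / 2) \<subseteq> upper_set f0 lam"
  shows "8 * real DIM('a) * ln (real n) / real n
    \<le> measure (density lborel f0) (ball c (r / 2 * (1 - 1 / (2 * real DIM('a)))))"
proof -
  define d where "d = DIM('a)"
  define vd where "vd = measure lborel (ball (0::'a) 1)"
  define \<rho> where "\<rho> = r / 2 * (1 - 1 / (2 * real d))"
  have d: "1 \<le> d" by (simp add: d_def Suc_leI)
  have "0 \<le> lam * vd" using lam by (simp add: vd_def)
  have "0 \<le> 1 - 1 / (2 * real d)" "1 - 1 / (2 * real d) \<le> 1" using d by (simp_all add: field_simps)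
  then have \<rho>: "0 \<le> \<rho>" "\<rho> \<le> r / 2"
    using radius_pos unfolding \<rho>_def by (simp_all add: mult_le_cancel_left1)
  have "(r / 2) ^ d * (1 / 2) \<le> (r / 2) ^ d * (1 - 1 / (2 * real d)) ^ d"
    using half_le_power_one_minus_half_inverse[OF d] radius_pos by (intro mult_left_mono) auto
  also have "\<dots> = \<rho> ^ d" unfolding \<rho>_def by (rule power_mult_distrib[symmetric])
  finally have half: "lam * vd * ((r / 2) ^ d * (1 / 2)) \<le> lam * vd * \<rho> ^ d"
    using \<open>0 \<le> lam * vd\<close> by (rule mult_left_mono)
  have "8 * real d * ln (real n) / real n = lam * vd * ((r / 2) ^ d * (1 / 2))"
    using radius_volume unfolding d_def vd_def by (simp add: field_simps)
  also have "\<dots> \<le> lam * (\<rho> ^ d * vd)" using half by (simp add: mult_ac)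
  also have "\<dots> \<le> measure (density lborel f0) (ball c \<rho>)"
    using ball subset_ball[OF \<rho>(2)] \<rho>(1) lam unfolding d_def vd_def
    by (intro measure_density_ball_ge) auto
  finally show ?thesis by (simp add: \<rho>_def d_def)
qed

lemma sample_misses_ball_prob_le:
  assumes "ball c (r / 2) \<subseteq> upper_set f0 lam"
  shows "measure (PiM {..<n} (\<lambda>_. density lborel f0))
      {X \<in> space (PiM {..<n} (\<lambda>_. density lborel f0)).
        \<forall>i<n. X i \<notin> ball c (r / 2 * (1 - 1 / (2 * real DIM('a))))}
    \<le> 1 / real n ^ (8 * DIM('a))"
    (is "measure _ ?miss \<le> _")
proof -
  define p where "p = measure (density lborel f0) (ball c (r / 2 * (1 - 1 / (2 * real DIM('a)))))"
  have "measure (PiM {..<n} (\<lambda>_. density lborel f0)) ?miss \<le> exp (- (real n * p))"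
    unfolding p_def by (rule measure_PiM_all_miss_le_exp[OF prob_space_density]) simp
  also have "\<dots> \<le> exp (- (real (8 * DIM('a)) * ln (real n)))"
  proof -
    have "real n * (8 * real DIM('a) * ln (real n) / real n) \<le> real n * p"
      using inner_ball_mass_ge[OF assms] by (intro mult_left_mono) (simp_all add: p_def)
    then show ?thesis using n by simp
  qed
  also have "\<dots> = 1 / real n ^ (8 * DIM('a))" using n by (intro exp_neg_mult_ln) simp
  finally show ?thesis .
qed

lemma finite_net_upper_set:
  "\<exists>F. finite F \<and> F \<subseteq> {c. ball c (r / 2) \<subseteq> upper_set f0 lam} \<and>
    real (card F) / real n ^ (8 * DIM('a)) \<le> 1 / real n ^ 2 \<and>
    (\<forall>c. ball c (r / 2) \<subseteq> upper_set f0 lam \<longrightarrow> (\<exists>c'\<in>F. dist c c' < r / (8 * real DIM('a))))"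
proof -
  define d where "d = DIM('a)"
  define vd where "vd = measure lborel (ball (0::'a) 1)"
  define T where "T = {c. ball c (r / 2) \<subseteq> upper_set f0 lam}"
  define s where "s = r / (8 * real d)"
  define p where "p = lam * ((s / 2) ^ d * vd)"
  have d: "1 \<le> d" by (simp add: d_def Suc_leI)
  then have s: "0 < s" "s / 2 \<le> r / 2"
    using radius_pos unfolding s_def by (simp_all add: divide_le_eq mult_le_cancel_left1)
  have "s / 2 = (r / 2) / (8 * real d)" by (simp add: s_def)
  then have "(s / 2) ^ d = (r / 2) ^ d / (8 * real d) ^ d" by (simp only: power_divide)
  then have "p = lam * vd * (r / 2) ^ d / (8 * real d) ^ d"
    by (simp add: p_def mult.commute mult.left_commute)
  then have p_eq: "p = 16 * real d * ln (real n) / (real n * (8 * real d) ^ d)"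
    using radius_volume by (simp add: d_def vd_def)
  have "0 < p" using lam s by (simp add: p_def vd_def)
  have mass: "ball c (s / 2) \<in> sets (density lborel f0) \<and>
      p \<le> measure (density lborel f0) (ball c (s / 2))"
    if "c \<in> T" for c
  proof -
    have "ball c (s / 2) \<subseteq> upper_set f0 lam" using that subset_ball[OF s(2)] by (auto simp: T_def)
    then have "p \<le> measure (density lborel f0) (ball c (s / 2))"
      unfolding p_def d_def vd_def by (rule measure_density_ball_ge) (use s lam in auto)
    then show ?thesis by simp
  qed
  have "\<exists>F. finite F \<and> F \<subseteq> T \<and> real (card F) * p \<le> 1 \<and> (\<forall>c\<in>T. \<exists>c'\<in>F. dist c c' < s)"
    by (rule finite_net_of_ball_mass[OF prob_space_density s(1) \<open>0 < p\<close>]) (rule mass)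
  then obtain F where F: "finite F" "F \<subseteq> T" "real (card F) * p \<le> 1" "\<forall>c\<in>T. \<exists>c'\<in>F. dist c c' < s"
    by blast
  have "real (card F) / real n ^ (8 * d) \<le> 1 / real n ^ 2"
  proof (cases "F = {}")
    case False
    with F(2) have "16 * real d * ln (real n) \<le> real n"
      unfolding d_def T_def using upper_ball_forces_large_sample by blast
    from net_card_div_power_le[OF n d this F(3)[unfolded p_eq]] show ?thesis .
  qed simp
  with F show ?thesis unfolding T_def s_def d_def by (intro exI[of _ F]) auto
qed

lemma sample_covers_upper_set:
  "\<exists>B\<in>sets (PiM {..<n} (\<lambda>_. density lborel f0)).
    measure (PiM {..<n} (\<lambda>_. density lborel f0)) B \<le> 1 / real n ^ 2 \<and>
    (\<forall>X\<in>space (PiM {..<n} (\<lambda>_. density lborel f0)) - B. \<forall>c. ball c (r / 2) \<subseteq> upper_set f0 lam \<longrightarrow>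
      (\<exists>k<n. dist (X k) c < r / 2 * (1 - 1 / (4 * real DIM('a)))))"
proof -
  define PM where "PM = PiM {..<n} (\<lambda>_. density lborel f0)"
  define \<rho> where "\<rho> = r / 2 * (1 - 1 / (2 * real DIM('a)))"
  define miss where "miss c = {X \<in> space PM. \<forall>i<n. X i \<notin> ball c \<rho>}" for c
  have "\<exists>F. finite F \<and> F \<subseteq> {c. ball c (r / 2) \<subseteq> upper_set f0 lam} \<and>
    real (card F) / real n ^ (8 * DIM('a)) \<le> 1 / real n ^ 2 \<and>
    (\<forall>c. ball c (r / 2) \<subseteq> upper_set f0 lam \<longrightarrow> (\<exists>c'\<in>F. dist c c' < r / (8 * real DIM('a))))"
    by (rule finite_net_upper_set)
  then obtain F where F: "finite F" "F \<subseteq> {c. ball c (r / 2) \<subseteq> upper_set f0 lam}"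
      "real (card F) / real n ^ (8 * DIM('a)) \<le> 1 / real n ^ 2"
      "\<forall>c. ball c (r / 2) \<subseteq> upper_set f0 lam \<longrightarrow> (\<exists>c'\<in>F. dist c c' < r / (8 * real DIM('a)))"
    by blast
  have sets: "miss c \<in> sets PM" for c
    unfolding miss_def PM_def by (rule sets_PiM_all_miss) simp
  have "measure PM (\<Union>c\<in>F. miss c) \<le> (\<Sum>c\<in>F. measure PM (miss c))"
    using sets F(1) by (intro measure_UNION_le) auto
  also have "\<dots> \<le> (\<Sum>c\<in>F. 1 / real n ^ (8 * DIM('a)))"
  proof (rule sum_mono)
    fix c assume "c \<in> F"
    with F(2) have "ball c (r / 2) \<subseteq> upper_set f0 lam" by blast
    from sample_misses_ball_prob_le[OF this]
    show "measure PM (miss c) \<le> 1 / real n ^ (8 * DIM('a))"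
      unfolding miss_def PM_def \<rho>_def .
  qed
  also have "\<dots> \<le> 1 / real n ^ 2" using F(3) by simp
  finally have "measure PM (\<Union>c\<in>F. miss c) \<le> 1 / real n ^ 2" .
  moreover have "\<exists>k<n. dist (X k) c < r / 2 * (1 - 1 / (4 * real DIM('a)))"
    if X: "X \<in> space PM - (\<Union>c\<in>F. miss c)" and c: "ball c (r / 2) \<subseteq> upper_set f0 lam" for X c
  proof -
    obtain c' where c': "c' \<in> F" "dist c c' < r / (8 * real DIM('a))" using F(4) c by blast
    with X obtain k where k: "k < n" "dist c' (X k) < \<rho>" by (auto simp: miss_def)
    have "dist (X k) c \<le> dist c c' + dist c' (X k)" by (metis dist_commute dist_triangle)
    also have "\<dots> < r / (8 * real DIM('a)) + \<rho>" using c' k by simp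
    also have "\<dots> = r / 2 * (1 - 1 / (4 * real DIM('a)))" by (simp add: \<rho>_def field_simps)
    finally show ?thesis using k(1) by blast
  qed
  moreover have "(\<Union>c\<in>F. miss c) \<in> sets PM" using sets F(1) by blast
  ultimately show ?thesis unfolding PM_def by blast
qed

lemma good_sample_event:
  assumes C: "0 < C" and epsbar: "0 < epsbar"
    and margin: "\<And>\<epsilon>. 0 < \<epsilon> \<Longrightarrow> \<epsilon> < epsbar \<Longrightarrow>
      (LINT x : {x. \<bar>f0 x - lam\<bar> \<le> \<epsilon>} | lborel. f0 x) \<le> C * \<epsilon>"
  shows "\<exists>E\<in>sets (PiM {..<n} (\<lambda>_. density lborel f0)).
    1 - real (n + 1) / real n ^ 2 \<le> measure (PiM {..<n} (\<lambda>_. density lborel f0)) E \<and>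
    (\<forall>X\<in>E. good_sample n lam C epsbar r f0 X)"
proof -
  define M where "M = density lborel f0"
  define PM where "PM = PiM {..<n} (\<lambda>_. M)"
  have M: "prob_space M" unfolding M_def by (rule prob_space_density)
  interpret P: prob_space PM unfolding PM_def by (rule prob_space_PiM) (use M in auto)
  obtain B1 where B1: "B1 \<in> sets PM" "measure PM B1 \<le> 1 / real n ^ 2"
    "\<forall>X\<in>space PM - B1. \<forall>c. ball c (r / 2) \<subseteq> upper_set f0 lam \<longrightarrow>
      (\<exists>k<n. dist (X k) c < r / 2 * (1 - 1 / (4 * real DIM('a))))"
    using sample_covers_upper_set unfolding PM_def M_def by blast
  have "measure M {x \<in> space M. \<bar>f0 x - lam\<bar> \<le> t} \<le> C * t" if "0 < t" "t < epsbar" for t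
    using margin[OF that] measure_density_eq_set_integral[of "{x. \<bar>f0 x - lam\<bar> \<le> t}"]
    by (simp add: M_def)
  then have "\<exists>B\<in>sets PM. measure PM B \<le> 1 / real n \<and> (\<forall>X\<in>space PM - B. \<forall>t. 0 < t \<and> t < epsbar \<longrightarrow>
      real (card {i. i < n \<and> \<bar>f0 (X i) - lam\<bar> \<le> t})
        \<le> real n * (C * t + 2 * sqrt (ln (real n) / real n)))"
    unfolding PM_def by (intro sample_margin_count_bound[OF M _ C epsbar _ n]) (simp_all add: M_def)
  then obtain B2 where B2: "B2 \<in> sets PM" "measure PM B2 \<le> 1 / real n"
    "\<forall>X\<in>space PM - B2. \<forall>t. 0 < t \<and> t < epsbar \<longrightarrow> real (card {i. i < n \<and> \<bar>f0 (X i) - lam\<bar> \<le> t})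
      \<le> real n * (C * t + 2 * sqrt (ln (real n) / real n))"
    by blast
  have "measure PM (B1 \<union> B2) \<le> 1 / real n ^ 2 + 1 / real n"
    using measure_Un_le[OF B1(1) B2(1)] B1(2) B2(2) by linarith
  also have "\<dots> = real (n + 1) / real n ^ 2" using n by (simp add: field_simps power2_eq_square)
  finally have "1 - real (n + 1) / real n ^ 2 \<le> measure PM (space PM - (B1 \<union> B2))"
    using P.prob_compl[of "B1 \<union> B2"] B1(1) B2(1) by simp
  moreover have "space PM - (B1 \<union> B2) \<in> sets PM" using B1(1) B2(1) by blast
  ultimately show ?thesis
    using B1(3) B2(3) unfolding PM_def[symmetric] M_def[symmetric] good_sample_def
    by (intro bexI[of _ "space PM - (B1 \<union> B2)"]) auto
qed

end

end

lemma h_mod_modulus: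
  assumes "ereal \<delta> \<le> 2 * h_mod f0 \<epsilon>" and "dist x z < \<delta> / 2"
  shows "\<bar>f0 x - f0 z\<bar> \<le> \<epsilon>"
proof -
  define H where "H = {ereal h | h. h \<ge> 0 \<and> (\<forall>x y. norm (x - y) \<le> h \<longrightarrow> \<bar>f0 x - f0 y\<bar> \<le> \<epsilon>)}"
  have "ereal (dist x z) < Sup H"
  proof (cases "Sup H")
    case (real h)
    with assms show ?thesis by (simp add: h_mod_def H_def)
  next
    case MInf
    with assms(1) show ?thesis by (simp add: h_mod_def H_def)
  qed simp
  then obtain h where "h \<ge> 0" "\<forall>x y. norm (x - y) \<le> h \<longrightarrow> \<bar>f0 x - f0 y\<bar> \<le> \<epsilon>" "dist x z < h"
    by (auto simp: H_def less_Sup_iff)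
  then show ?thesis by (simp add: dist_norm)
qed

lemma binder_D_le_on_good_sample:
  fixes f0 f :: "'a::euclidean_space \<Rightarrow> real" and X :: "nat \<Rightarrow> 'a"
  assumes stable: "\<And>ll lh x y. lam - epsbar \<le> ll \<Longrightarrow> ll < lh \<Longrightarrow> lh \<le> lam + epsbar \<Longrightarrow>
        x \<in> upper_set f0 lh \<Longrightarrow> y \<in> upper_set f0 lh \<Longrightarrow>
        (\<not> connected_component (upper_set f0 lh) x y \<longrightarrow> \<not> connected_component (upper_set f0 ll) x y) \<and>
        (connected_component (upper_set f0 ll) x y \<longrightarrow> connected_component (upper_set f0 lh) x y)"
    and good: "good_sample n lam C epsbar r f0 X"
    and r: "0 < r" "r \<le> \<delta>" and h: "ereal \<delta> \<le> 2 * h_mod f0 \<epsilon>"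
    and close: "\<And>x. \<bar>f x - f0 x\<bar> \<le> \<epsilon>" and \<epsilon>: "0 < \<epsilon>" "\<epsilon> < epsbar / 2"
    and a: "0 \<le> a" and m: "0 \<le> m" and am: "m + a \<le> 2" and n: "2 \<le> n"
  shows "binder_D n a m (psi_graph n X f lam \<delta>) (psi_level n X f0 lam)
    \<le> 8 * (C * \<epsilon> + sqrt (ln (real n) / real n))"
proof -
  define \<eta> where "\<eta> = 1 / (4 * real DIM('a))"
  have "1 < 4 * real DIM('a)" using DIM_positive[where 'a = 'a] by linarith
  then have \<eta>: "0 < \<eta>" "\<eta> < 1" by (simp_all add: \<eta>_def)
  have "binder_D n a m (psi_graph n X f lam \<delta>) (psi_level n X f0 lam)
      \<le> 4 * real (card {i. i < n \<and> \<bar>f0 (X i) - lam\<bar> \<le> 2 * \<epsilon>}) / real n"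
  proof (rule binder_D_psi_le_card_margin[OF _ close r \<eta> _ _ _ a m am n])
    show "\<bar>f0 x - f0 z\<bar> \<le> \<epsilon>" if "dist x z < \<delta> / 2" for x z
      using h that by (rule h_mod_modulus)
    show "\<exists>k<n. dist (X k) c < r / 2 * (1 - \<eta>)" if "ball c (r / 2) \<subseteq> upper_set f0 lam" for c
      using good that by (simp add: good_sample_def \<eta>_def)
    show "connected_component (upper_set f0 lam) x y"
      if "x \<in> upper_set f0 lam" "y \<in> upper_set f0 lam"
        "connected_component (upper_set f0 (lam - 2 * \<epsilon>)) x y" for x y
      using stable[of "lam - 2 * \<epsilon>" lam x y] that \<epsilon> by simp
    show "connected_component (upper_set f0 (lam + 2 * \<epsilon>)) x y"
      if "x \<in> upper_set f0 (lam + 2 * \<epsilon>)" "y \<in> upper_set f0 (lam + 2 * \<epsilon>)"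
        "connected_component (upper_set f0 lam) x y" for x y
      using stable[of lam "lam + 2 * \<epsilon>" x y] that \<epsilon> by simp
  qed
  also have "\<dots> \<le> 4 * (real n * (C * (2 * \<epsilon>) + 2 * sqrt (ln (real n) / real n))) / real n"
    using good \<epsilon> by (intro divide_right_mono) (simp_all add: good_sample_def)
  also have "\<dots> = 8 * (C * \<epsilon> + sqrt (ln (real n) / real n))" using n by (simp add: field_simps)
  finally show ?thesis .
qed

theorem theoremS1:
  fixes f0 :: "'a::euclidean_space \<Rightarrow> real"
    and lam C epsbar a m :: real and n :: nat
  assumes nonneg: "\<And>x. f0 x \<ge> 0"
    and dens_int: "integrable lborel f0" and dens_one: "integral\<^sup>L lborel f0 = 1"
    and cont: "continuous_on UNIV f0"
    and vanish: "(f0 \<longlongrightarrow> 0) at_infinity"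
    and lam_pos: "lam > 0"
    and C_pos: "C > 0" and epsbar_pos: "epsbar > 0"
    and margin: "\<And>\<epsilon>. 0 < \<epsilon> \<Longrightarrow> \<epsilon> < epsbar \<Longrightarrow>
        (LINT x : {x. \<bar>f0 x - lam\<bar> \<le> \<epsilon>} | lborel. f0 x) \<le> C * \<epsilon>"
    and stable: "\<And>ll lh x y. lam - epsbar \<le> ll \<Longrightarrow> ll < lh \<Longrightarrow> lh \<le> lam + epsbar \<Longrightarrow>
        x \<in> upper_set f0 lh \<Longrightarrow> y \<in> upper_set f0 lh \<Longrightarrow>
        (\<not> connected_component (upper_set f0 lh) x y \<longrightarrow> \<not> connected_component (upper_set f0 ll) x y) \<and>
        (connected_component (upper_set f0 ll) x y \<longrightarrow> connected_component (upper_set f0 lh) x y)"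
    and n_ge: "n \<ge> 16"
    and a_pos: "0 < a" and a_le: "a \<le> 1" and m_pos: "0 < m" and m_le: "m \<le> 1" and am: "a \<le> 2 * m"
  shows "\<exists>E \<in> sets (PiM {..<n} (\<lambda>_. density lborel (\<lambda>x. ennreal (f0 x)))).
     measure (PiM {..<n} (\<lambda>_. density lborel (\<lambda>x. ennreal (f0 x)))) E \<ge> 1 - real (n + 1) / real n ^ 2 \<and>
     (\<forall>X \<in> E. \<forall>\<epsilon>. 0 < \<epsilon> \<and> \<epsilon> < epsbar / 2 \<longrightarrow>
        (\<forall>\<delta> (f :: 'a \<Rightarrow> real).
           r_rad n lam DIM('a) (measure lborel (ball (0::'a) 1)) \<le> \<delta> \<and> ereal \<delta> \<le> 2 * h_mod f0 \<epsilon> \<and>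
           (\<forall>x. \<bar>f x - f0 x\<bar> \<le> \<epsilon>) \<longrightarrow>
           binder_D n a m (psi_graph n X f lam \<delta>) (psi_level n X f0 lam)
             \<le> 8 * (C * \<epsilon> + sqrt (ln (real n) / real n))))"
proof -
  define r where "r = r_rad n lam DIM('a) (measure lborel (ball (0::'a) 1))"
  have "0 < r" using radius_pos[OF nonneg dens_int dens_one n_ge lam_pos r_def] .
  obtain E where E: "E \<in> sets (PiM {..<n} (\<lambda>_. density lborel (\<lambda>x. ennreal (f0 x))))"
      "1 - real (n + 1) / real n ^ 2 \<le> measure (PiM {..<n} (\<lambda>_. density lborel (\<lambda>x. ennreal (f0 x)))) E"
    and good: "\<forall>X\<in>E. good_sample n lam C epsbar r f0 X"
    using good_sample_event[OF nonneg dens_int dens_one n_ge lam_pos r_def C_pos epsbar_pos margin]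
    by blast
  have "binder_D n a m (psi_graph n X f lam \<delta>) (psi_level n X f0 lam)
      \<le> 8 * (C * \<epsilon> + sqrt (ln (real n) / real n))"
    if "X \<in> E" "0 < \<epsilon>" "\<epsilon> < epsbar / 2" "r \<le> \<delta>" "ereal \<delta> \<le> 2 * h_mod f0 \<epsilon>"
      "\<forall>x. \<bar>f x - f0 x\<bar> \<le> \<epsilon>" for X \<epsilon> \<delta> f
    using that good \<open>0 < r\<close> a_pos a_le m_pos m_le n_ge
    by (intro binder_D_le_on_good_sample[OF stable]) auto
  with E show ?thesis unfolding r_def by blast
qed

end
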